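(* Let $\Theta_1,\Theta_2,\ldots$ be independent random variables with $\mathbb P(\Theta_j\le\theta)=\theta/(\theta+j-1)$ for $\theta\ge0$ (convention $0/0=1$). For $n\ge1$, let $C_{n,\theta}$ be the composition of $n$ whose binary representation is $(1(\Theta_j\le\theta))_{1\le j\le n}$, and let $(\Pi_{n,\theta},\theta\ge0)$ be the associated partition-valued process. Then for every $n>2$ the process $(\Pi_{n,\theta},\theta\ge0)$ is not a Markov process.
   Context: A composition of $n$ is a sequence of positive integers $(n_1,\ldots,n_k)$ with sum $n$, viewed as $n$ balls in an ordered sequence of $k$ nonempty boxes, the $i$th box containing $n_i$ balls. Its binary representation is the length-$n$ 0/1 sequence formed by concatenating the words $10^{n_1-1},\ldots,10^{n_k-1}$. Given a process $(C_{n,\theta},\theta\ge0)$ of compositions of $n$, the associated partition-valued process $(\Pi_{n,\theta},\theta\ge0)$ is obtained by labelling the $n$ ball positions (left to right) by $\sigma(1),\ldots,\sigma(n)$ for a uniform random permutation $\sigma$ of $[n]$ independent of the compositions (the same $\sigma$ for all $\theta$), and then forgetting the order of the boxes, yielding a partition of $[n]$ into the sets of labels in each box. *)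

theory Defs
  imports "HOL-Probability.Probability" "HOL-Combinatorics.Permutations"
begin

definition theta_cdf :: "nat \<Rightarrow> real \<Rightarrow> real" where
  "theta_cdf j \<theta> = (if \<theta> + real j - 1 = 0 then 1 else \<theta> / (\<theta> + real j - 1))"

text \<open>Given a binary word b (positions 1..n), two positions lie in the same box of the
  associated composition iff no position strictly after the smaller and up to the larger
  carries a 1 (each box is a word 1 0...0).\<close>
definition same_box :: "(nat \<Rightarrow> bool) \<Rightarrow> nat \<Rightarrow> nat \<Rightarrow> bool" where
  "same_box b i j \<longleftrightarrow> (\<forall>k. min i j < k \<and> k \<le> max i j \<longrightarrow> \<not> b k)"

definition comp_boxes :: "nat \<Rightarrow> (nat \<Rightarrow> bool) \<Rightarrow> nat set set" where
  "comp_boxes n b = (\<lambda>i. {j \<in> {1..n}. same_box b i j}) ` {1..n}"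

definition label_partition :: "(nat \<Rightarrow> nat) \<Rightarrow> nat set set \<Rightarrow> nat set set" where
  "label_partition s P = (\<lambda>B. s ` B) ` P"

definition Pi_proc :: "nat \<Rightarrow> (nat \<Rightarrow> 'a \<Rightarrow> real) \<Rightarrow> ('a \<Rightarrow> nat \<Rightarrow> nat) \<Rightarrow> real \<Rightarrow> 'a \<Rightarrow> nat set set" where
  "Pi_proc n \<Theta> \<sigma> \<theta> \<omega> = label_partition (\<sigma> \<omega>) (comp_boxes n (\<lambda>j. \<Theta> j \<omega> \<le> \<theta>))"

text \<open>Markov property (w.r.t. the natural filtration) of a process with discrete state space,
  in its finite-dimensional form: for times s_0 < ... < s_k < t in T,
  P(X_t = y, X_{s_i} = x_i for all i) P(X_{s_k} = x_k)
    = P(X_t = y, X_{s_k} = x_k) P(X_{s_i} = x_i for all i).\<close>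
definition markov_discrete :: "'a measure \<Rightarrow> real set \<Rightarrow> (real \<Rightarrow> 'a \<Rightarrow> 'b) \<Rightarrow> bool" where
  "markov_discrete M T X \<longleftrightarrow>
     (\<forall>k (s::nat \<Rightarrow> real) (x::nat \<Rightarrow> 'b) t y.
        (\<forall>i\<le>k. s i \<in> T) \<and> t \<in> T \<and> (\<forall>i<k. s i < s (Suc i)) \<and> s k < t \<longrightarrow>
        measure M {\<omega> \<in> space M. X t \<omega> = y \<and> (\<forall>i\<le>k. X (s i) \<omega> = x i)}
          * measure M {\<omega> \<in> space M. X (s k) \<omega> = x k}
        = measure M {\<omega> \<in> space M. X t \<omega> = y \<and> X (s k) \<omega> = x k}
          * measure M {\<omega> \<in> space M. \<forall>i\<le>k. X (s i) \<omega> = x i})"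

end

theory Submission
  imports Defs
begin

(* As theta grows the composition is refined: position j starts a new box once Theta_j <= theta.
   The state S = {{1}, {2..n}} can be entered in two ways: position 2 is cut first and ball 1
   carries label 1, or position n is cut first and ball n carries label 1. The process then
   stays in S until the next cut, which comes from Theta_3, ..., Theta_n in the first case and
   from Theta_2, ..., Theta_(n-1) in the second. Hence for u <= w the probability of sitting in
   S at times u and w is a sum of two product kernels F_2(u) S_3(w) + F_n(u) S_2(w), where F_j is
   the distribution function of Theta_j and S_3, S_2 are the corresponding survival products.
   The Markov property at times 1 < 2 < 3 makes the 2 x 2 determinant of this kernel vanish, but
   it factors as (F_2(1) F_n(2) - F_2(2) F_n(1)) (S_3(3) S_2(2) - S_2(3) S_3(2)), and both
   factors are nonzero multiples of n - 2. *)

section \<open>Boxes of a composition\<close>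

lemma same_box_commute: "same_box b i j = same_box b j i"
  unfolding same_box_def by (simp add: min.commute max.commute)

lemma same_box_iff: "i \<le> j \<Longrightarrow> same_box b i j \<longleftrightarrow> (\<forall>k. i < k \<and> k \<le> j \<longrightarrow> \<not> b k)"
  unfolding same_box_def by (simp add: min_def max_def)

lemma same_box_trans:
  assumes "same_box b i j" "same_box b j l"
  shows "same_box b i l"
proof -
  have "(min i j < k \<and> k \<le> max i j) \<or> (min j l < k \<and> k \<le> max j l)"
    if "min i l < k" "k \<le> max i l" for k :: nat
    using that by linarith
  then show ?thesis
    using assms unfolding same_box_def by blast
qed

lemma same_box_Suc_iff: "same_box b i (Suc i) \<longleftrightarrow> \<not> b (Suc i)"
  by (auto simp: same_box_iff le_Suc_eq less_Suc_eq_le)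

definition comp_box :: "nat \<Rightarrow> (nat \<Rightarrow> bool) \<Rightarrow> nat \<Rightarrow> nat set" where
  "comp_box n b i = {j \<in> {1..n}. same_box b i j}"

lemma comp_boxes_eq_image: "comp_boxes n b = comp_box n b ` {1..n}"
  by (simp add: comp_boxes_def comp_box_def)

lemma comp_boxes_cong:
  assumes "\<And>j. j \<in> {1..n} \<Longrightarrow> b j = b' j"
  shows "comp_boxes n b = comp_boxes n b'"
proof -
  have "same_box b i j = same_box b' i j" if "i \<in> {1..n}" "j \<in> {1..n}" for i j
    using that assms unfolding same_box_def by (auto simp: min_def max_def)
  then show ?thesis
    unfolding comp_boxes_def by (intro image_cong refl) auto
qed

lemma comp_boxes_eq_comp_box:
  assumes "B \<in> comp_boxes n b" "j \<in> B"
  shows "B = comp_box n b j"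
  using assms same_box_trans same_box_commute unfolding comp_boxes_def comp_box_def by blast

lemma comp_box_eq_atLeastAtMost:
  assumes "1 \<le> l" "l \<le> i" "i \<le> r" "r \<le> n"
    and "l = 1 \<or> b l" "r = n \<or> b (Suc r)" "\<forall>k. l < k \<and> k \<le> r \<longrightarrow> \<not> b k"
  shows "comp_box n b i = {l..r}"
proof (intro equalityI subsetI)
  fix j assume j: "j \<in> comp_box n b i"
  show "j \<in> {l..r}"
  proof (rule ccontr)
    assume "j \<notin> {l..r}"
    then have "(j < l \<and> b l) \<or> (r < j \<and> b (Suc r))" using assms j by (auto simp: comp_box_def)
    then show False using j assms unfolding comp_box_def same_box_def by (auto simp: min_def max_def)
  qed
next
  fix j assume "j \<in> {l..r}"
  then show "j \<in> comp_box n b i"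
    using assms unfolding comp_box_def same_box_def by (auto simp: min_def max_def)
qed

lemma comp_boxes_split_first:
  assumes "2 \<le> n" "b 2" "\<forall>k\<in>{3..n}. \<not> b k"
  shows "comp_boxes n b = {{1}, {2..n}}"
proof -
  have "comp_box n b 1 = {1..1}"
    by (rule comp_box_eq_atLeastAtMost) (use assms in \<open>auto simp: numeral_2_eq_2\<close>)
  moreover have "comp_box n b ` {2..n} = (\<lambda>_. {2..n}) ` {2..n}"
    by (intro image_cong refl comp_box_eq_atLeastAtMost) (use assms in auto)
  moreover have "{1..n} = insert 1 {2..n}" using assms by auto
  ultimately show ?thesis using assms by (simp add: comp_boxes_eq_image image_constant_conv)
qed

lemma comp_boxes_split_last:
  assumes "2 \<le> n" "b n" "\<forall>k\<in>{2..n-1}. \<not> b k"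
  shows "comp_boxes n b = {{1..n-1}, {n}}"
proof -
  have "comp_box n b n = {n..n}"
    by (rule comp_box_eq_atLeastAtMost) (use assms in auto)
  moreover have "comp_box n b ` {1..n-1} = (\<lambda>_. {1..n-1}) ` {1..n-1}"
    by (intro image_cong refl comp_box_eq_atLeastAtMost) (use assms in auto)
  moreover have "{1..n} = insert n {1..n-1}" using assms by auto
  ultimately show ?thesis using assms by (simp add: comp_boxes_eq_image image_constant_conv insert_commute)
qed

lemma comp_boxes_eq_singleton_complement_iff:
  assumes n: "2 \<le> n" and q: "q \<in> {1..n}"
  shows "comp_boxes n b = {{q}, {1..n} - {q}} \<longleftrightarrow>
    (q = 1 \<and> b 2 \<and> (\<forall>k\<in>{3..n}. \<not> b k)) \<or> (q = n \<and> b n \<and> (\<forall>k\<in>{2..n-1}. \<not> b k))"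
proof
  assume boxes: "comp_boxes n b = {{q}, {1..n} - {q}}"
  have box_q: "same_box b q j \<longleftrightarrow> j = q" if "j \<in> {1..n}" for j
    using comp_boxes_eq_comp_box[of "{q}" n b q] boxes that by (auto simp: comp_box_def)
  have rest: "same_box b j l" if "j \<in> {1..n} - {q}" "l \<in> {1..n} - {q}" for j l
    using comp_boxes_eq_comp_box[of "{1..n} - {q}" n b j] boxes that by (auto simp: comp_box_def)
  consider "q = 1" | "q = n" | "1 < q" "q < n" using q by force
  then show "(q = 1 \<and> b 2 \<and> (\<forall>k\<in>{3..n}. \<not> b k)) \<or> (q = n \<and> b n \<and> (\<forall>k\<in>{2..n-1}. \<not> b k))"
  proof cases
    case 1
    have "\<not> same_box b 1 2" using box_q[of 2] n 1 by auto
    then have "b 2" using same_box_Suc_iff[of b 1] by (simp add: numeral_2_eq_2)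
    moreover have "same_box b 2 n" using rest n 1 by auto
    ultimately show ?thesis using 1 by (auto simp: same_box_iff)
  next
    case 2
    have "\<not> same_box b (n - 1) n" using box_q[of "n - 1"] n 2 by (auto simp: same_box_commute)
    then have "b n" using same_box_Suc_iff[of b "n - 1"] n by simp
    moreover have "same_box b 1 (n - 1)" by (rule rest) (use n 2 in auto)
    ultimately show ?thesis using 2 by (auto simp: same_box_iff)
  next
    case 3
    have "same_box b 1 n" using rest n 3 by auto
    then have "same_box b 1 q" using 3 by (auto simp: same_box_iff)
    then show ?thesis using box_q[of 1] 3 by (auto simp: same_box_commute)
  qed
next
  have diff_1: "{1..n} - {1} = {2..n}" and diff_n: "{1..n} - {n} = {1..n-1}" using n by auto
  assume "(q = 1 \<and> b 2 \<and> (\<forall>k\<in>{3..n}. \<not> b k)) \<or> (q = n \<and> b n \<and> (\<forall>k\<in>{2..n-1}. \<not> b k))"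
  then show "comp_boxes n b = {{q}, {1..n} - {q}}"
  proof
    assume first: "q = 1 \<and> b 2 \<and> (\<forall>k\<in>{3..n}. \<not> b k)"
    then have "q = 1" ..
    show ?thesis unfolding \<open>q = 1\<close> diff_1 using first comp_boxes_split_first[OF n] by blast
  next
    assume last: "q = n \<and> b n \<and> (\<forall>k\<in>{2..n-1}. \<not> b k)"
    then have "q = n" ..
    show ?thesis unfolding \<open>q = n\<close> diff_n using last comp_boxes_split_last[OF n] by (simp add: insert_commute)
  qed
qed

section \<open>Labelled compositions with blocks {1} and {2..n}\<close>

lemma label_partition_eq_iff:
  assumes "bij p"
  shows "label_partition p P = Q \<longleftrightarrow> P = label_partition (inv p) Q"
proof -
  have "label_partition (inv p) (label_partition p P) = P"
    using assms by (simp add: label_partition_def image_image image_inv_f_f bij_is_inj)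
  moreover have "label_partition p (label_partition (inv p) Q) = Q"
    using assms by (simp add: label_partition_def image_image surj_f_inv_f bij_is_surj)
  ultimately show ?thesis by blast
qed

lemma label_partition_comp_boxes_eq_split_iff:
  assumes n: "2 \<le> n" and p: "p permutes {1..n}"
  shows "label_partition p (comp_boxes n b) = {{1}, {2..n}} \<longleftrightarrow>
    (p 1 = 1 \<and> b 2 \<and> (\<forall>k\<in>{3..n}. \<not> b k)) \<or> (p n = 1 \<and> b n \<and> (\<forall>k\<in>{2..n-1}. \<not> b k))"
proof -
  let ?q = "inv p 1"
  have inv_p: "inv p permutes {1..n}" using p by (rule permutes_inv)
  have q: "?q \<in> {1..n}" using n permutes_in_image[OF inv_p] by auto
  have "inv p ` {2..n} = inv p ` ({1..n} - {1})" by (intro arg_cong[where f="image (inv p)"]) auto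
  also have "\<dots> = {1..n} - {?q}"
    using permutes_image[OF inv_p] permutes_inj[OF inv_p] by (simp add: image_set_diff)
  finally have "label_partition (inv p) {{1}, {2..n}} = {{?q}, {1..n} - {?q}}"
    by (simp add: label_partition_def)
  moreover have "?q = 1 \<longleftrightarrow> p 1 = 1" "?q = n \<longleftrightarrow> p n = 1"
    using permutes_inverses[OF p] by metis+
  ultimately show ?thesis
    using permutes_bij[OF p] comp_boxes_eq_singleton_complement_iff[OF n q]
    by (simp add: label_partition_eq_iff)
qed

lemma label_partition_stays_split_iff:
  fixes x :: "nat \<Rightarrow> real"
  assumes n: "2 \<le> n" and p: "p permutes {1..n}" and Ts: "finite Ts" "Ts \<noteq> {}"
  shows "(\<forall>\<theta>\<in>Ts. label_partition p (comp_boxes n (\<lambda>j. x j \<le> \<theta>)) = {{1}, {2..n}}) \<longleftrightarrow>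
    (p 1 = 1 \<and> x 2 \<le> Min Ts \<and> (\<forall>k\<in>{3..n}. Max Ts < x k)) \<or>
    (p n = 1 \<and> x n \<le> Min Ts \<and> (\<forall>k\<in>{2..n-1}. Max Ts < x k))"
proof -
  have "1 \<in> {1..n}" "n \<in> {1..n}" "1 \<noteq> n" using n by auto
  then have "p 1 \<noteq> p n" using inj_onD[OF permutes_inj_on[OF p]] by blast
  then have excl: "\<not> (p 1 = 1 \<and> p n = 1)" by auto
  have window: "(\<forall>\<theta>\<in>Ts. x a \<le> \<theta> \<and> (\<forall>k\<in>K. \<theta> < x k)) \<longleftrightarrow> x a \<le> Min Ts \<and> (\<forall>k\<in>K. Max Ts < x k)"
    for a K using Ts by auto
  have "(\<forall>\<theta>\<in>Ts. label_partition p (comp_boxes n (\<lambda>j. x j \<le> \<theta>)) = {{1}, {2..n}}) \<longleftrightarrow>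
    (\<forall>\<theta>\<in>Ts. (p 1 = 1 \<and> x 2 \<le> \<theta> \<and> (\<forall>k\<in>{3..n}. \<theta> < x k)) \<or>
              (p n = 1 \<and> x n \<le> \<theta> \<and> (\<forall>k\<in>{2..n-1}. \<theta> < x k)))"
    unfolding label_partition_comp_boxes_eq_split_iff[OF n p] not_le ..
  also have "\<dots> \<longleftrightarrow> (p 1 = 1 \<and> (\<forall>\<theta>\<in>Ts. x 2 \<le> \<theta> \<and> (\<forall>k\<in>{3..n}. \<theta> < x k))) \<or>
      (p n = 1 \<and> (\<forall>\<theta>\<in>Ts. x n \<le> \<theta> \<and> (\<forall>k\<in>{2..n-1}. \<theta> < x k)))"
    using excl Ts(2) by blast
  finally show ?thesis unfolding window .
qed

section \<open>The distribution functions of the Theta_j\<close>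

definition theta_survival :: "nat set \<Rightarrow> real \<Rightarrow> real" where
  "theta_survival K w = (\<Prod>k\<in>K. 1 - theta_cdf k w)"

lemma one_minus_theta_cdf:
  assumes "2 \<le> j" "0 \<le> \<theta>"
  shows "1 - theta_cdf j \<theta> = (real j - 1) / (\<theta> + real j - 1)"
  using assms by (simp add: theta_cdf_def field_simps)

lemma theta_survival_pos: "K \<subseteq> {2..} \<Longrightarrow> 0 \<le> w \<Longrightarrow> 0 < theta_survival K w"
  unfolding theta_survival_def
  by (intro prod_pos) (auto simp: one_minus_theta_cdf subset_eq)

lemma theta_survival_split:
  assumes "3 \<le> n"
  shows "theta_survival {2..n-1} w * (1 - theta_cdf n w) = (1 - theta_cdf 2 w) * theta_survival {3..n} w"
proof -
  have "theta_survival {2..n-1} w * (1 - theta_cdf n w) = theta_survival (insert n {2..n-1}) w"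
    using assms unfolding theta_survival_def by (simp add: mult.commute)
  also have "insert n {2..n-1} = insert 2 {3..n}" using assms by auto
  also have "theta_survival (insert 2 {3..n}) w = (1 - theta_cdf 2 w) * theta_survival {3..n} w"
    unfolding theta_survival_def by simp
  finally show ?thesis .
qed

lemma theta_cdf_cross_ne:
  assumes "2 < n"
  shows "theta_cdf 2 1 * theta_cdf n 2 \<noteq> theta_cdf 2 2 * theta_cdf n 1"
  using assms by (simp add: theta_cdf_def field_simps)

lemma theta_survival_cross_ne:
  assumes n: "2 < n"
  shows "theta_survival {3..n} 3 * theta_survival {2..n-1} 2 \<noteq> theta_survival {2..n-1} 3 * theta_survival {3..n} 2"
proof
  define S2 S3 where "S2 = theta_survival {2..n-1}" and "S3 = theta_survival {3..n}"
  define \<rho> where "\<rho> w = (w + real n - 1) / ((w + 1) * (real n - 1))" for w :: real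
  have ratio: "S2 w = S3 w * \<rho> w" if "0 \<le> w" for w
  proof -
    have "S2 w * ((real n - 1) / (w + real n - 1)) = S3 w / (w + 1)"
      using theta_survival_split[of n w] n that unfolding S2_def S3_def
      by (simp add: one_minus_theta_cdf)
    moreover have "0 < real n - 1" "0 < w + real n - 1" "0 < w + 1" using n that by auto
    ultimately have "S2 w * ((w + 1) * (real n - 1)) = S3 w * (w + real n - 1)"
      by (simp add: field_simps)
    moreover have "(w + 1) * (real n - 1) \<noteq> 0" using n that by simp
    ultimately show ?thesis unfolding \<rho>_def by (simp add: eq_divide_eq)
  qed
  have "0 < S3 3" "0 < S3 2" unfolding S3_def by (intro theta_survival_pos; auto)+
  moreover assume "S3 3 * S2 2 = S2 3 * S3 2"
  then have "S3 3 * S3 2 * \<rho> 2 = S3 3 * S3 2 * \<rho> 3" by (simp add: ratio)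
  ultimately have "\<rho> 2 = \<rho> 3" by simp
  moreover have "0 < real n - 1" using n by simp
  ultimately have "(real n - 1) * (real n - 2) = 0" unfolding \<rho>_def by (simp add: field_simps)
  moreover have "real n - 1 \<noteq> 0" "real n - 2 \<noteq> 0" using n by auto
  ultimately show False by simp
qed

lemma rank_two_kernel_det:
  fixes a1 a2 b1 b2 A2 A3 B2 B3 :: "'a :: comm_ring"
  shows "(a1 * A3 + b1 * B3) * (a2 * A2 + b2 * B2) - (a2 * A3 + b2 * B3) * (a1 * A2 + b1 * B2)
       = (a1 * b2 - a2 * b1) * (A3 * B2 - B3 * A2)"
  by (simp add: algebra_simps)

section \<open>The partition-valued process\<close>

lemma measurable_Pi_proc:
  assumes "\<sigma> \<in> measurable M (count_space UNIV)" "\<And>j. j \<in> {1..n} \<Longrightarrow> \<Theta> j \<in> borel_measurable M"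
  shows "Pi_proc n \<Theta> \<sigma> \<theta> \<in> measurable M (count_space UNIV)"
proof -
  define cut where "cut \<omega> = {j \<in> {1..n}. \<Theta> j \<omega> \<le> \<theta>}" for \<omega>
  have "Pi_proc n \<Theta> \<sigma> \<theta> = (\<lambda>\<omega>. (\<lambda>C \<omega>. label_partition (\<sigma> \<omega>) (comp_boxes n (\<lambda>j. j \<in> C))) (cut \<omega>) \<omega>)"
    unfolding Pi_proc_def cut_def by (intro ext arg_cong[where f="label_partition _"] comp_boxes_cong) auto
  also have "\<dots> \<in> measurable M (count_space UNIV)"
  proof (rule measurable_compose_countable'[where I="Pow {1..n}"])
    show "(\<lambda>\<omega>. label_partition (\<sigma> \<omega>) (comp_boxes n (\<lambda>j. j \<in> C))) \<in> measurable M (count_space UNIV)" for C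
      by (rule measurable_compose[OF assms(1)]) simp
    have "cut -` {C} \<inter> space M = {\<omega> \<in> space M. \<forall>j\<in>{1..n}. (\<Theta> j \<omega> \<le> \<theta>) = (j \<in> C)}" if "C \<subseteq> {1..n}" for C
      using that unfolding cut_def by blast
    moreover have "{\<omega> \<in> space M. \<forall>j\<in>{1..n}. (\<Theta> j \<omega> \<le> \<theta>) = (j \<in> C)} \<in> sets M" for C
      using assms(2) by (intro sets.sets_Collect_finite_All) (auto intro: measurable_sets)
    ultimately show "cut \<in> measurable M (count_space (Pow {1..n}))"
      by (auto simp: measurable_count_space_eq2 cut_def)
  qed (simp add: countable_finite)
  finally show ?thesis .
qed

lemma markov_discrete_three_times:
  assumes "markov_discrete M T X" "r \<in> T" "s \<in> T" "t \<in> T" "r < s" "s < t"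
  shows "measure M {\<omega> \<in> space M. \<forall>\<theta>\<in>{r, s, t}. X \<theta> \<omega> = x} * measure M {\<omega> \<in> space M. \<forall>\<theta>\<in>{s}. X \<theta> \<omega> = x}
       = measure M {\<omega> \<in> space M. \<forall>\<theta>\<in>{s, t}. X \<theta> \<omega> = x} * measure M {\<omega> \<in> space M. \<forall>\<theta>\<in>{r, s}. X \<theta> \<omega> = x}"
  using assms(1)[unfolded markov_discrete_def, rule_format, where k=1 and s="\<lambda>i. if i = 0 then r else s" and x="\<lambda>_. x" and t=t and y=x]
    assms(2-)
  by (simp add: le_Suc_eq all_conj_distrib conj_commute conj_left_commute)

lemma card_permutes_value_eq:
  assumes "i \<in> S" "j \<in> S"
  shows "card {p. p permutes S \<and> p i = y} = card {p. p permutes S \<and> p j = y}"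
proof (rule bij_betw_same_card)
  let ?\<tau> = "Transposition.transpose i j"
  have \<tau>: "?\<tau> permutes S" using assms by (rule permutes_swap_id)
  show "bij_betw (\<lambda>p. p \<circ> ?\<tau>) {p. p permutes S \<and> p i = y} {p. p permutes S \<and> p j = y}"
    by (rule bij_betw_byWitness[where f'="\<lambda>p. p \<circ> ?\<tau>"])
       (auto simp: comp_assoc intro: permutes_compose[OF \<tau>])
qed

lemma (in prob_space) prob_le_and_gt_indep_vars:
  fixes \<Theta> :: "'i \<Rightarrow> 'a \<Rightarrow> real"
  assumes "indep_vars (\<lambda>_. borel) \<Theta> I" "a \<in> I" "K \<subseteq> I" "finite K" "a \<notin> K"
  shows "prob {\<omega> \<in> space M. \<Theta> a \<omega> \<le> u \<and> (\<forall>k\<in>K. w < \<Theta> k \<omega>)}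
       = prob {\<omega> \<in> space M. \<Theta> a \<omega> \<le> u} * (\<Prod>k\<in>K. prob {\<omega> \<in> space M. w < \<Theta> k \<omega>})"
proof -
  define A where "A j = (if j \<in> K then {w<..} else {..u})" for j
  have "prob {\<omega> \<in> space M. \<Theta> a \<omega> \<le> u \<and> (\<forall>k\<in>K. w < \<Theta> k \<omega>)} = prob (\<Inter>j\<in>insert a K. \<Theta> j -` A j \<inter> space M)"
    using assms(5) by (intro arg_cong[where f=prob]) (auto simp: A_def)
  also have "\<dots> = (\<Prod>j\<in>insert a K. prob (\<Theta> j -` A j \<inter> space M))"
    by (rule indep_varsD[OF assms(1)]) (use assms(2-4) in \<open>auto simp: A_def\<close>)
  also have "\<dots> = prob (\<Theta> a -` A a \<inter> space M) * (\<Prod>k\<in>K. prob (\<Theta> k -` A k \<inter> space M))"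
    using assms(4,5) by (rule prod.insert)
  also have "(\<Prod>k\<in>K. prob (\<Theta> k -` A k \<inter> space M)) = (\<Prod>k\<in>K. prob {\<omega> \<in> space M. w < \<Theta> k \<omega>})"
    using assms(5) by (intro prod.cong refl arg_cong[where f=prob]) (auto simp: A_def)
  also have "\<Theta> a -` A a \<inter> space M = {\<omega> \<in> space M. \<Theta> a \<omega> \<le> u}"
    using assms(5) by (auto simp: A_def)
  finally show ?thesis .
qed

locale ewens_partition_process = prob_space M
  for M :: "'a measure" and \<Theta> :: "nat \<Rightarrow> 'a \<Rightarrow> real" and \<sigma> :: "'a \<Rightarrow> nat \<Rightarrow> nat" and n :: nat +
  assumes indep_Theta: "indep_vars (\<lambda>_. borel) \<Theta> {1..}"
    and cdf_Theta: "\<And>j \<theta>. j \<ge> 1 \<Longrightarrow> \<theta> \<ge> 0 \<Longrightarrow> prob {\<omega> \<in> space M. \<Theta> j \<omega> \<le> \<theta>} = theta_cdf j \<theta>"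
    and measurable_sigma: "\<sigma> \<in> measurable M (count_space UNIV)"
    and distr_sigma: "distr M (count_space UNIV) \<sigma> = measure_pmf (pmf_of_set {p. p permutes {1..n}})"
    and indep_sigma_Theta: "\<And>(A :: (nat \<Rightarrow> nat) set) B. B \<in> sets (PiM {1..} (\<lambda>_. (borel :: real measure))) \<Longrightarrow>
           prob {\<omega> \<in> space M. \<sigma> \<omega> \<in> A \<and> (\<lambda>j\<in>{1..}. \<Theta> j \<omega>) \<in> B}
         = prob {\<omega> \<in> space M. \<sigma> \<omega> \<in> A} * prob {\<omega> \<in> space M. (\<lambda>j\<in>{1..}. \<Theta> j \<omega>) \<in> B}"
    and n_gt_2: "2 < n"
begin

definition stay_prob :: "real set \<Rightarrow> real" where
  "stay_prob Ts = prob {\<omega> \<in> space M. \<forall>\<theta>\<in>Ts. Pi_proc n \<Theta> \<sigma> \<theta> \<omega> = {{1}, {2..n}}}"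

lemma measurable_Theta: "1 \<le> j \<Longrightarrow> \<Theta> j \<in> borel_measurable M"
  using indep_Theta unfolding indep_vars_def2 by auto

lemma sets_sigma_in: "{\<omega> \<in> space M. \<sigma> \<omega> \<in> A} \<in> sets M"
proof -
  have "{\<omega> \<in> space M. \<sigma> \<omega> \<in> A} = \<sigma> -` A \<inter> space M" by auto
  then show ?thesis using measurable_sets[OF measurable_sigma] by simp
qed

lemma prob_sigma_in:
  "prob {\<omega> \<in> space M. \<sigma> \<omega> \<in> A} = card ({p. p permutes {1..n}} \<inter> A) / card {p. p permutes {1..n}}"
proof -
  have "prob {\<omega> \<in> space M. \<sigma> \<omega> \<in> A} = measure (distr M (count_space UNIV) \<sigma>) A"
    using measurable_sigma by (subst measure_distr) (auto simp: vimage_def Int_def conj_commute)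
  also have "\<dots> = card ({p. p permutes {1..n}} \<inter> A) / card {p. p permutes {1..n}}"
    unfolding distr_sigma
    by (rule measure_pmf_of_set) (auto intro: permutes_id finite_permutations)
  finally show ?thesis .
qed

lemma AE_sigma_permutes: "AE \<omega> in M. \<sigma> \<omega> permutes {1..n}"
proof -
  have "prob {\<omega> \<in> space M. \<sigma> \<omega> \<in> {p. p permutes {1..n}}} = 1"
    unfolding prob_sigma_in by (auto intro: permutes_id finite_permutations simp: card_gt_0_iff)
  then show ?thesis
    using AE_in_set_eq_1[OF sets_sigma_in[of "{p. p permutes {1..n}}"]] by simp
qed

lemma prob_sigma_last_eq_first: "prob {\<omega> \<in> space M. \<sigma> \<omega> n = 1} = prob {\<omega> \<in> space M. \<sigma> \<omega> 1 = 1}"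
  using card_permutes_value_eq[of n "{1..n}" 1 1] n_gt_2 prob_sigma_in[of "{p. p n = 1}"] prob_sigma_in[of "{p. p 1 = 1}"]
  by (simp add: Int_def)

lemma prob_sigma_first_pos: "0 < prob {\<omega> \<in> space M. \<sigma> \<omega> 1 = 1}"
proof -
  have "id \<in> {p. p permutes {1..n}} \<inter> {p. p 1 = 1}" by (simp add: permutes_id)
  moreover have "finite ({p. p permutes {1..n}} \<inter> {p. p 1 = 1})"
    by (intro finite_Int disjI1 finite_permutations) simp
  ultimately have "card ({p. p permutes {1..n}} \<inter> {p. p 1 = 1}) > 0"
    using card_gt_0_iff by blast
  moreover have "card {p. p permutes {1..n}} > 0"
    using permutes_id[of "{1..n}"] finite_permutations[of "{1..n}"] card_gt_0_iff by blast
  ultimately show ?thesis using prob_sigma_in[of "{p. p 1 = 1}"] by simp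
qed

lemma prob_Theta_gt: "1 \<le> k \<Longrightarrow> 0 \<le> w \<Longrightarrow> prob {\<omega> \<in> space M. w < \<Theta> k \<omega>} = 1 - theta_cdf k w"
proof -
  assume k: "1 \<le> k" and w: "0 \<le> w"
  have "{\<omega> \<in> space M. \<Theta> k \<omega> \<le> w} \<in> sets M" using measurable_Theta[OF k] by measurable
  moreover have "{\<omega> \<in> space M. w < \<Theta> k \<omega>} = space M - {\<omega> \<in> space M. \<Theta> k \<omega> \<le> w}" by auto
  ultimately show ?thesis using prob_compl cdf_Theta[OF k w] by simp
qed

lemma sets_sigma_cut_window:
  assumes "1 \<le> a" "finite K" "K \<subseteq> {1..}"
  shows "{\<omega> \<in> space M. \<sigma> \<omega> \<in> A \<and> \<Theta> a \<omega> \<le> u \<and> (\<forall>k\<in>K. w < \<Theta> k \<omega>)} \<in> sets M"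
proof -
  have "{\<omega> \<in> space M. \<Theta> j \<omega> \<le> u} \<in> sets M" if "1 \<le> j" for j
    using measurable_Theta[OF that] by measurable
  moreover have "{\<omega> \<in> space M. w < \<Theta> j \<omega>} \<in> sets M" if "1 \<le> j" for j
    using measurable_Theta[OF that] by measurable
  ultimately show ?thesis
    using assms sets_sigma_in by (intro sets.sets_Collect_conj sets.sets_Collect_finite_All) auto
qed

lemma prob_sigma_cut_window:
  assumes a: "1 \<le> a" and K: "finite K" "K \<subseteq> {1..}" "a \<notin> K" and uw: "0 \<le> u" "0 \<le> w"
  shows "prob {\<omega> \<in> space M. \<sigma> \<omega> \<in> A \<and> \<Theta> a \<omega> \<le> u \<and> (\<forall>k\<in>K. w < \<Theta> k \<omega>)}
       = prob {\<omega> \<in> space M. \<sigma> \<omega> \<in> A} * (theta_cdf a u * theta_survival K w)"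
proof -
  define B where "B = {f \<in> space (PiM {1..} (\<lambda>_. borel :: real measure)). f a \<le> u \<and> (\<forall>k\<in>K. w < f k)}"
  have component: "(\<lambda>f. f j) \<in> borel_measurable (PiM {1..} (\<lambda>_. borel :: real measure))" if "1 \<le> j" for j :: nat
    using that by (intro measurable_component_singleton) simp
  have "B \<in> sets (PiM {1..} (\<lambda>_. borel))"
    unfolding B_def using a K component
    by (intro sets.sets_Collect_conj sets.sets_Collect_finite_All) (auto intro: measurable_sets)
  moreover have restrict_in_B: "(\<lambda>j\<in>{1..}. \<Theta> j \<omega>) \<in> B \<longleftrightarrow> \<Theta> a \<omega> \<le> u \<and> (\<forall>k\<in>K. w < \<Theta> k \<omega>)" for \<omega>
    using a K unfolding B_def space_PiM by auto
  ultimately have "prob {\<omega> \<in> space M. \<sigma> \<omega> \<in> A \<and> \<Theta> a \<omega> \<le> u \<and> (\<forall>k\<in>K. w < \<Theta> k \<omega>)}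
      = prob {\<omega> \<in> space M. \<sigma> \<omega> \<in> A} * prob {\<omega> \<in> space M. \<Theta> a \<omega> \<le> u \<and> (\<forall>k\<in>K. w < \<Theta> k \<omega>)}"
    using indep_sigma_Theta[of B A] unfolding restrict_in_B by blast
  also have "prob {\<omega> \<in> space M. \<Theta> a \<omega> \<le> u \<and> (\<forall>k\<in>K. w < \<Theta> k \<omega>)}
      = prob {\<omega> \<in> space M. \<Theta> a \<omega> \<le> u} * (\<Prod>k\<in>K. prob {\<omega> \<in> space M. w < \<Theta> k \<omega>})"
    using a K by (intro prob_le_and_gt_indep_vars[OF indep_Theta]) auto
  also have "\<dots> = theta_cdf a u * theta_survival K w"
    unfolding theta_survival_def using a K uw
    by (intro arg_cong2[where f="(*)"] cdf_Theta prod.cong refl prob_Theta_gt) auto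
  finally show ?thesis .
qed

lemma sets_Pi_proc_stays:
  assumes "finite Ts"
  shows "{\<omega> \<in> space M. \<forall>\<theta>\<in>Ts. Pi_proc n \<Theta> \<sigma> \<theta> \<omega> = x} \<in> sets M"
proof -
  have "{\<omega> \<in> space M. Pi_proc n \<Theta> \<sigma> \<theta> \<omega> = x} \<in> sets M" for \<theta>
  proof -
    have "Pi_proc n \<Theta> \<sigma> \<theta> -` {x} \<inter> space M \<in> sets M"
      by (rule measurable_sets[OF measurable_Pi_proc[OF measurable_sigma]]) (auto intro: measurable_Theta)
    then show ?thesis by (simp add: vimage_def Int_def conj_commute)
  qed
  then show ?thesis using assms by (intro sets.sets_Collect_finite_All)
qed

lemma AE_Pi_proc_stays_split_iff:
  assumes "finite Ts" "Ts \<noteq> {}"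
  shows "AE \<omega> in M. (\<forall>\<theta>\<in>Ts. Pi_proc n \<Theta> \<sigma> \<theta> \<omega> = {{1}, {2..n}}) \<longleftrightarrow>
    (\<sigma> \<omega> 1 = 1 \<and> \<Theta> 2 \<omega> \<le> Min Ts \<and> (\<forall>k\<in>{3..n}. Max Ts < \<Theta> k \<omega>)) \<or>
    (\<sigma> \<omega> n = 1 \<and> \<Theta> n \<omega> \<le> Min Ts \<and> (\<forall>k\<in>{2..n-1}. Max Ts < \<Theta> k \<omega>))"
  using AE_sigma_permutes
proof eventually_elim
  case (elim \<omega>)
  have "2 \<le> n" using n_gt_2 by simp
  show ?case
    unfolding Pi_proc_def label_partition_stays_split_iff[OF \<open>2 \<le> n\<close> elim assms] ..
qed

lemma stay_prob_eq:
  assumes Ts: "finite Ts" "Ts \<noteq> {}" "Ts \<subseteq> {0..}"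
  shows "stay_prob Ts = prob {\<omega> \<in> space M. \<sigma> \<omega> 1 = 1} *
    (theta_cdf 2 (Min Ts) * theta_survival {3..n} (Max Ts) + theta_cdf n (Min Ts) * theta_survival {2..n-1} (Max Ts))"
proof -
  define u w where "u = Min Ts" and "w = Max Ts"
  have uw: "0 \<le> u" "u \<le> w" using Ts unfolding u_def w_def by auto
  define E1 where "E1 = {\<omega> \<in> space M. \<sigma> \<omega> \<in> {p. p 1 = 1} \<and> \<Theta> 2 \<omega> \<le> u \<and> (\<forall>k\<in>{3..n}. w < \<Theta> k \<omega>)}"
  define En where "En = {\<omega> \<in> space M. \<sigma> \<omega> \<in> {p. p n = 1} \<and> \<Theta> n \<omega> \<le> u \<and> (\<forall>k\<in>{2..n-1}. w < \<Theta> k \<omega>)}"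
  have E1: "E1 \<in> sets M" and En: "En \<in> sets M"
    unfolding E1_def En_def using n_gt_2 by (intro sets_sigma_cut_window; auto)+
  have "stay_prob Ts = prob (E1 \<union> En)"
    unfolding stay_prob_def
  proof (rule measure_eq_AE)
    show "AE \<omega> in M. (\<omega> \<in> {\<omega> \<in> space M. \<forall>\<theta>\<in>Ts. Pi_proc n \<Theta> \<sigma> \<theta> \<omega> = {{1}, {2..n}}}) = (\<omega> \<in> E1 \<union> En)"
      using AE_Pi_proc_stays_split_iff[OF Ts(1,2)]
      by eventually_elim (auto simp: E1_def En_def u_def w_def)
  qed (use E1 En sets_Pi_proc_stays[OF Ts(1)] in auto)
  also have "\<dots> = prob E1 + prob En"
  proof (rule finite_measure_Union[OF E1 En])
    have "n \<in> {3..n}" using n_gt_2 by simp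
    then show "E1 \<inter> En = {}" using uw unfolding E1_def En_def by fastforce
  qed
  also have "prob E1 = prob {\<omega> \<in> space M. \<sigma> \<omega> 1 = 1} * (theta_cdf 2 u * theta_survival {3..n} w)"
    unfolding E1_def using uw by (subst prob_sigma_cut_window) auto
  also have "prob En = prob {\<omega> \<in> space M. \<sigma> \<omega> 1 = 1} * (theta_cdf n u * theta_survival {2..n-1} w)"
    unfolding En_def prob_sigma_last_eq_first[symmetric] using uw n_gt_2 by (subst prob_sigma_cut_window) auto
  finally show ?thesis unfolding u_def w_def by (simp add: distrib_left)
qed

theorem not_markov: "\<not> markov_discrete M {0..} (Pi_proc n \<Theta> \<sigma>)"
proof
  define c a b A B where "c = prob {\<omega> \<in> space M. \<sigma> \<omega> 1 = 1}" and "a = theta_cdf 2" and "b = theta_cdf n"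
    and "A = theta_survival {3..n}" and "B = theta_survival {2..n-1}"
  assume "markov_discrete M {0..} (Pi_proc n \<Theta> \<sigma>)"
  then have "stay_prob {1, 2, 3} * stay_prob {2} = stay_prob {2, 3} * stay_prob {1, 2}"
    unfolding stay_prob_def by (rule markov_discrete_three_times) auto
  then have "c * (a 1 * A 3 + b 1 * B 3) * (c * (a 2 * A 2 + b 2 * B 2))
      = c * (a 2 * A 3 + b 2 * B 3) * (c * (a 1 * A 2 + b 1 * B 2))"
    unfolding c_def a_def b_def A_def B_def by (simp add: stay_prob_eq)
  then have "c * c * ((a 1 * b 2 - a 2 * b 1) * (A 3 * B 2 - B 3 * A 2)) = 0"
    unfolding rank_two_kernel_det[symmetric] by (simp add: algebra_simps)
  moreover have "c \<noteq> 0" unfolding c_def using prob_sigma_first_pos by simp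
  ultimately show False
    using theta_cdf_cross_ne[OF n_gt_2] theta_survival_cross_ne[OF n_gt_2]
    unfolding a_def b_def A_def B_def by simp
qed

end

theorem mainTheorem2:
  fixes M :: "'a measure" and \<Theta> :: "nat \<Rightarrow> 'a \<Rightarrow> real"
    and \<sigma> :: "'a \<Rightarrow> nat \<Rightarrow> nat" and n :: nat
  assumes "prob_space M"
    and "prob_space.indep_vars M (\<lambda>_. borel) \<Theta> {1..}"
    and "\<And>j \<theta>. j \<ge> 1 \<Longrightarrow> \<theta> \<ge> 0 \<Longrightarrow>
           measure M {\<omega> \<in> space M. \<Theta> j \<omega> \<le> \<theta>} = theta_cdf j \<theta>"
    and "\<sigma> \<in> measurable M (count_space UNIV)"
    and "distr M (count_space UNIV) \<sigma> = measure_pmf (pmf_of_set {p. p permutes {1..n}})"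
    and "\<And>(A :: (nat \<Rightarrow> nat) set) B. B \<in> sets (PiM {1..} (\<lambda>_. (borel :: real measure))) \<Longrightarrow>
           measure M {\<omega> \<in> space M. \<sigma> \<omega> \<in> A \<and> (\<lambda>j\<in>{1..}. \<Theta> j \<omega>) \<in> B}
         = measure M {\<omega> \<in> space M. \<sigma> \<omega> \<in> A}
           * measure M {\<omega> \<in> space M. (\<lambda>j\<in>{1..}. \<Theta> j \<omega>) \<in> B}"
    and "n > 2"
  shows "\<not> markov_discrete M {0..} (Pi_proc n \<Theta> \<sigma>)"
proof -
  have "ewens_partition_process M \<Theta> \<sigma> n"
    using assms by (simp add: ewens_partition_process_def ewens_partition_process_axioms_def)
  then show ?thesis by (rule ewens_partition_process.not_markov)
qed

end
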